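(* Let $(Y,u)$ and $(Y',u')$ be non-empty ultrametric spaces, let $f:Y\to Y'$ be a map and let $z'\in Y'$ be an attractor for $f$. If $(Y,u)$ is spherically complete, then $z'\in f(Y)$.
   Context: An ultrametric space $(Y,u)$ is a set $Y$ with a map $u$ from $Y\times Y$ onto a totally ordered set $\Gamma$ with last element $\infty$ such that for all $x,y,z\in Y$: $u(y,z)=\infty$ iff $y=z$; $u(y,z)\ge\min\{u(y,x),u(x,z)\}$; $u(y,z)=u(z,y)$. (Larger $u$ means closer.) For $y\in Y$ and $\alpha\in\Gamma$, the closed ball is $B_\alpha(y)=\{z\in Y: u(y,z)\ge\alpha\}$, and $B(x,y):=B_{u(x,y)}(x)$. A ball is a union of a non-empty collection of closed balls which contain a common element. A nest of balls is a set of balls totally ordered by inclusion. $(Y,u)$ is spherically complete if every nest of balls has non-empty intersection. We write $fy$ for $f(y)$. An element $z'\in Y'$ is an attractor for $f:Y\to Y'$ if for every $y\in Y$ with $z'\neq fy$ there is $z\in Y$ such that (AT1) $u'(fz,z')>u'(fy,z')$ and (AT2) $f(B(y,z))\subseteq B(fy,z')$. *)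

theory Defs
  imports Main
begin

text \<open>An ultrametric space on carrier Y with distance u onto the value set G
  (a subset of a linearly ordered type), whose last element is infty.
  Larger values mean closer.\<close>
definition ultrametric_space :: "'a set \<Rightarrow> ('a \<Rightarrow> 'a \<Rightarrow> 'g::linorder) \<Rightarrow> 'g set \<Rightarrow> 'g \<Rightarrow> bool" where
  "ultrametric_space Y u G infty \<longleftrightarrow>
     (\<lambda>(x, y). u x y) ` (Y \<times> Y) = G \<and>
     infty \<in> G \<and> (\<forall>g\<in>G. g \<le> infty) \<and>
     (\<forall>y\<in>Y. \<forall>z\<in>Y. u y z = infty \<longleftrightarrow> y = z) \<and>
     (\<forall>x\<in>Y. \<forall>y\<in>Y. \<forall>z\<in>Y. u y z \<ge> min (u y x) (u x z)) \<and>
     (\<forall>y\<in>Y. \<forall>z\<in>Y. u y z = u z y)"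

definition closed_ball :: "'a set \<Rightarrow> ('a \<Rightarrow> 'a \<Rightarrow> 'g::linorder) \<Rightarrow> 'g \<Rightarrow> 'a \<Rightarrow> 'a set" where
  "closed_ball Y u \<alpha> y = {z \<in> Y. u y z \<ge> \<alpha>}"

definition ball2 :: "'a set \<Rightarrow> ('a \<Rightarrow> 'a \<Rightarrow> 'g::linorder) \<Rightarrow> 'a \<Rightarrow> 'a \<Rightarrow> 'a set" where
  "ball2 Y u x y = closed_ball Y u (u x y) x"

definition is_ball :: "'a set \<Rightarrow> ('a \<Rightarrow> 'a \<Rightarrow> 'g::linorder) \<Rightarrow> 'g set \<Rightarrow> 'a set \<Rightarrow> bool" where
  "is_ball Y u G B \<longleftrightarrow>
     (\<exists>C. C \<noteq> {} \<and> (\<forall>c\<in>C. \<exists>y\<in>Y. \<exists>\<alpha>\<in>G. c = closed_ball Y u \<alpha> y) \<and>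
          (\<exists>x. \<forall>c\<in>C. x \<in> c) \<and> B = \<Union>C)"

definition is_nest :: "'a set \<Rightarrow> ('a \<Rightarrow> 'a \<Rightarrow> 'g::linorder) \<Rightarrow> 'g set \<Rightarrow> 'a set set \<Rightarrow> bool" where
  "is_nest Y u G N \<longleftrightarrow> (\<forall>B\<in>N. is_ball Y u G B) \<and>
     (\<forall>B1\<in>N. \<forall>B2\<in>N. B1 \<subseteq> B2 \<or> B2 \<subseteq> B1)"

definition spherically_complete :: "'a set \<Rightarrow> ('a \<Rightarrow> 'a \<Rightarrow> 'g::linorder) \<Rightarrow> 'g set \<Rightarrow> bool" where
  "spherically_complete Y u G \<longleftrightarrow> (\<forall>N. is_nest Y u G N \<longrightarrow> Y \<inter> \<Inter>N \<noteq> {})"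

definition attractor ::
  "'a set \<Rightarrow> ('a \<Rightarrow> 'a \<Rightarrow> 'g::linorder) \<Rightarrow> 'b set \<Rightarrow> ('b \<Rightarrow> 'b \<Rightarrow> 'h::linorder)
    \<Rightarrow> ('a \<Rightarrow> 'b) \<Rightarrow> 'b \<Rightarrow> bool" where
  "attractor Y u Y' u' f z' \<longleftrightarrow>
     (\<forall>y\<in>Y. z' \<noteq> f y \<longrightarrow>
        (\<exists>z\<in>Y. u' (f z) z' > u' (f y) z' \<and>
               f ` ball2 Y u y z \<subseteq> ball2 Y' u' (f y) z'))"

end

theory Submission
  imports Defs
begin

text \<open>Suppose \<open>z'\<close> is not a value of \<open>f\<close>. The attractor property then yields, for every
  \<open>y\<close>, a point \<open>g y\<close> with \<open>f (g y)\<close> strictly closer to \<open>z'\<close> such that \<open>f\<close> maps the ball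
  \<open>B(y, g y)\<close> into \<open>B(f y, z')\<close>. Order \<open>Y\<close> by letting \<open>x\<close> improve on \<open>y\<close> when \<open>x\<close> lies
  in \<open>B(y, g y)\<close> with \<open>f x\<close> strictly closer to \<open>z'\<close>; the ultrametric inequality makes
  the balls \<open>B(y, g y)\<close> shrink along this order, so a chain gives a nest of balls, and
  spherical completeness provides an upper bound. A maximal element \<open>m\<close> given by Zorn's
  lemma is then contradicted by \<open>g m\<close>.\<close>

lemma ultrametric_sym:
  "ultrametric_space Y u G infty \<Longrightarrow> y \<in> Y \<Longrightarrow> z \<in> Y \<Longrightarrow> u y z = u z y"
  unfolding ultrametric_space_def by blast

lemma ultrametric_self:
  "ultrametric_space Y u G infty \<Longrightarrow> y \<in> Y \<Longrightarrow> u y y = infty"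
  unfolding ultrametric_space_def by blast

lemma ultrametric_le_infty:
  "ultrametric_space Y u G infty \<Longrightarrow> y \<in> Y \<Longrightarrow> z \<in> Y \<Longrightarrow> u y z \<le> infty"
  unfolding ultrametric_space_def by blast

lemma ultrametric_ge_trans:
  assumes "ultrametric_space Y u G infty" "x \<in> Y" "y \<in> Y" "z \<in> Y"
    and "\<alpha> \<le> u x y" "\<alpha> \<le> u y z"
  shows "\<alpha> \<le> u x z"
proof -
  have "min (u x y) (u y z) \<le> u x z"
    using assms(1-4) unfolding ultrametric_space_def by blast
  with assms(5,6) show ?thesis by (rule order_trans[OF min.boundedI])
qed

lemma closed_ball_subset_closed_ball:
  assumes "ultrametric_space Y u G infty" "y \<in> Y"
    and "x \<in> closed_ball Y u \<alpha> y" "\<alpha> \<le> \<beta>"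
  shows "closed_ball Y u \<beta> x \<subseteq> closed_ball Y u \<alpha> y"
proof
  fix w assume "w \<in> closed_ball Y u \<beta> x"
  then have "w \<in> Y" "\<alpha> \<le> u x w"
    using assms(4) unfolding closed_ball_def by auto
  moreover have "x \<in> Y" "\<alpha> \<le> u y x"
    using assms(3) unfolding closed_ball_def by auto
  ultimately show "w \<in> closed_ball Y u \<alpha> y"
    using ultrametric_ge_trans[OF assms(1,2)] unfolding closed_ball_def by blast
qed

lemma centre_in_ball2:
  "ultrametric_space Y u G infty \<Longrightarrow> y \<in> Y \<Longrightarrow> z \<in> Y \<Longrightarrow> y \<in> ball2 Y u y z"
  using ultrametric_self ultrametric_le_infty unfolding ball2_def closed_ball_def by fastforce

lemma ball2_is_ball:
  assumes "ultrametric_space Y u G infty" "y \<in> Y" "z \<in> Y"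
  shows "is_ball Y u G (ball2 Y u y z)"
proof -
  have "u y z \<in> G"
    using assms unfolding ultrametric_space_def by blast
  moreover have "y \<in> ball2 Y u y z"
    using centre_in_ball2[OF assms] .
  ultimately show ?thesis
    using assms(2) unfolding is_ball_def ball2_def
    by (intro exI[of _ "{closed_ball Y u (u y z) y}"]) blast
qed

locale attractor_descent =
  fixes Y :: "'a set" and u :: "'a \<Rightarrow> 'a \<Rightarrow> 'g::linorder" and G :: "'g set" and infty :: 'g
    and Y' :: "'b set" and u' :: "'b \<Rightarrow> 'b \<Rightarrow> 'h::linorder" and G' :: "'h set" and infty' :: 'h
    and f :: "'a \<Rightarrow> 'b" and z' :: 'b and g :: "'a \<Rightarrow> 'a"
  assumes ultra: "ultrametric_space Y u G infty"
    and ultra': "ultrametric_space Y' u' G' infty'"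
    and f_into: "f ` Y \<subseteq> Y'" and z'_in: "z' \<in> Y'"
    and g_into: "g ` Y \<subseteq> Y"
    and g_closer: "y \<in> Y \<Longrightarrow> u' (f y) z' < u' (f (g y)) z'"
    and g_ball: "y \<in> Y \<Longrightarrow> f ` ball2 Y u y (g y) \<subseteq> ball2 Y' u' (f y) z'"
begin

definition step_ball :: "'a \<Rightarrow> 'a set" where
  "step_ball y = ball2 Y u y (g y)"

definition closeness :: "'a \<Rightarrow> 'h" where
  "closeness y = u' (f y) z'"

definition improves :: "'a rel" where
  "improves = {(y, x). y \<in> Y \<and> x \<in> step_ball y \<and> (x = y \<or> closeness y < closeness x)}"

lemma mem_step_ball: "x \<in> step_ball y \<longleftrightarrow> x \<in> Y \<and> u y (g y) \<le> u y x"
  unfolding step_ball_def ball2_def closed_ball_def by auto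

lemma centre_in_step_ball: "y \<in> Y \<Longrightarrow> y \<in> step_ball y"
  using g_into centre_in_ball2[OF ultra] unfolding step_ball_def by blast

lemma g_in_step_ball: "y \<in> Y \<Longrightarrow> g y \<in> step_ball y"
  using g_into by (auto simp: mem_step_ball)

lemma closeness_le_image_dist:
  "y \<in> Y \<Longrightarrow> x \<in> step_ball y \<Longrightarrow> closeness y \<le> u' (f y) (f x)"
  using g_ball unfolding step_ball_def closeness_def ball2_def closed_ball_def by blast

lemma closeness_mono:
  assumes "y \<in> Y" "x \<in> step_ball y"
  shows "closeness y \<le> closeness x"
proof -
  have "x \<in> Y" using assms(2) by (simp add: mem_step_ball)
  then have "f x \<in> Y'" "f y \<in> Y'" using assms(1) f_into by auto
  moreover have "closeness y \<le> u' (f x) (f y)"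
    using closeness_le_image_dist[OF assms] ultrametric_sym[OF ultra' calculation] by simp
  ultimately show ?thesis
    unfolding closeness_def using ultrametric_ge_trans[OF ultra' _ _ z'_in] by blast
qed

text \<open>Otherwise \<open>y\<close> would lie in the smaller ball around \<open>x\<close>, and then \<open>f y\<close> would be at
  least as close to \<open>z'\<close> as \<open>f x\<close>.\<close>
lemma radius_mono:
  assumes "y \<in> Y" "x \<in> step_ball y" "closeness y < closeness x"
  shows "u y (g y) \<le> u x (g x)"
proof (rule ccontr)
  assume "\<not> ?thesis"
  have x: "x \<in> Y" and "u y (g y) \<le> u y x"
    using assms(2) by (auto simp: mem_step_ball)
  with \<open>\<not> ?thesis\<close> have "y \<in> step_ball x"
    using assms(1) ultrametric_sym[OF ultra] by (auto simp: mem_step_ball)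
  then have "closeness x \<le> closeness y" using closeness_mono x by blast
  with assms(3) show False by simp
qed

lemma step_ball_subset:
  assumes "y \<in> Y" "x \<in> step_ball y" "closeness y < closeness x"
  shows "step_ball x \<subseteq> step_ball y"
  using closed_ball_subset_closed_ball[OF ultra assms(1)] radius_mono[OF assms] assms(2)
  unfolding step_ball_def ball2_def by blast

lemma improves_in_Y: "(y, x) \<in> improves \<Longrightarrow> y \<in> Y \<and> x \<in> Y"
  by (simp add: improves_def mem_step_ball)

lemma improves_refl: "y \<in> Y \<Longrightarrow> (y, y) \<in> improves"
  using centre_in_step_ball by (simp add: improves_def)

lemma improves_step_ball_subset: "(y, x) \<in> improves \<Longrightarrow> step_ball x \<subseteq> step_ball y"
  using step_ball_subset unfolding improves_def by auto

lemma Field_improves: "Field improves = Y"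
proof
  show "Field improves \<subseteq> Y"
    using improves_in_Y by (auto simp: Field_def)
  show "Y \<subseteq> Field improves"
    using improves_refl by (blast intro: FieldI1)
qed

lemma Partial_order_improves: "Partial_order improves"
proof -
  have "improves \<subseteq> Y \<times> Y"
    using improves_in_Y by auto
  moreover have "refl_on Y improves"
    using improves_refl by (simp add: refl_on_def)
  moreover have "trans improves"
  proof (rule transI)
    fix x y z assume xy: "(x, y) \<in> improves" and yz: "(y, z) \<in> improves"
    then have "step_ball y \<subseteq> step_ball x"
      using improves_step_ball_subset by blast
    with xy yz show "(x, z) \<in> improves"
      unfolding improves_def by auto
  qed
  moreover have "antisym improves"
    unfolding antisym_def improves_def by auto
  ultimately show ?thesis
    unfolding partial_order_on_def preorder_on_def Field_improves by blast
qed

lemma nest_step_balls: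
  assumes "C \<in> Chains improves"
  shows "is_nest Y u G (step_ball ` C)"
proof -
  have comparable: "(c, d) \<in> improves \<or> (d, c) \<in> improves" if "c \<in> C" "d \<in> C" for c d
    using assms that unfolding Chains_def by blast
  have "is_ball Y u G (step_ball c)" if "c \<in> C" for c
  proof -
    have "c \<in> Y" using comparable[OF that that] improves_in_Y by blast
    then show ?thesis
      using g_into ball2_is_ball[OF ultra] unfolding step_ball_def by blast
  qed
  moreover have "step_ball c \<subseteq> step_ball d \<or> step_ball d \<subseteq> step_ball c" if "c \<in> C" "d \<in> C" for c d
    using comparable[OF that] improves_step_ball_subset by blast
  ultimately show ?thesis unfolding is_nest_def by blast
qed

lemma chain_has_upper_bound:
  assumes "spherically_complete Y u G" "C \<in> Chains improves"
  shows "\<exists>v\<in>Field improves. \<forall>c\<in>C. (c, v) \<in> improves"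
proof (cases "\<exists>m\<in>C. \<forall>c\<in>C. (c, m) \<in> improves")
  case True
  then show ?thesis by (blast intro: FieldI2)
next
  case no_max: False
  \<comment> \<open>Every member of the chain is strictly improved upon inside the chain, so a common
    point of the nest of balls is strictly closer than each member.\<close>
  obtain x where x: "x \<in> Y" "\<forall>c\<in>C. x \<in> step_ball c"
    using assms(1) nest_step_balls[OF assms(2)] unfolding spherically_complete_def by blast
  have "(c, x) \<in> improves" if c: "c \<in> C" for c
  proof -
    obtain d where d: "d \<in> C" "(d, c) \<notin> improves" using no_max c by blast
    with assms(2) c have cd: "(c, d) \<in> improves"
      unfolding Chains_def by blast
    with d(2) have "closeness c < closeness d"
      unfolding improves_def by auto
    also have "closeness d \<le> closeness x"
      using closeness_mono improves_in_Y[OF cd] d(1) x(2) by blast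
    finally show ?thesis
      using improves_in_Y[OF cd] c x(2) unfolding improves_def by blast
  qed
  then show ?thesis using x(1) Field_improves by blast
qed

theorem not_spherically_complete: "\<not> spherically_complete Y u G"
proof
  assume "spherically_complete Y u G"
  from Zorns_po_lemma[OF Partial_order_improves chain_has_upper_bound[OF this]]
  obtain m where m: "m \<in> Y" "\<forall>x\<in>Y. (m, x) \<in> improves \<longrightarrow> x = m"
    unfolding Field_improves by blast
  have "(m, g m) \<in> improves"
    using m(1) g_in_step_ball g_closer by (auto simp: improves_def closeness_def)
  then have "g m = m" using m g_into by blast
  with g_closer[OF m(1)] show False by simp
qed

end

theorem theorem1:
  fixes Y :: "'a set" and u :: "'a \<Rightarrow> 'a \<Rightarrow> 'g::linorder" and G :: "'g set" and infty :: 'g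
    and Y' :: "'b set" and u' :: "'b \<Rightarrow> 'b \<Rightarrow> 'h::linorder" and G' :: "'h set" and infty' :: 'h
    and f :: "'a \<Rightarrow> 'b" and z' :: 'b
  assumes "ultrametric_space Y u G infty" and "Y \<noteq> {}"
    and "ultrametric_space Y' u' G' infty'" and "Y' \<noteq> {}"
    and "f ` Y \<subseteq> Y'" and "z' \<in> Y'"
    and "attractor Y u Y' u' f z'"
    and "spherically_complete Y u G"
  shows "z' \<in> f ` Y"
proof (rule ccontr)
  assume "z' \<notin> f ` Y"
  with assms(7) have "\<forall>y\<in>Y. \<exists>z\<in>Y. u' (f y) z' < u' (f z) z' \<and>
      f ` ball2 Y u y z \<subseteq> ball2 Y' u' (f y) z'"
    unfolding attractor_def by blast
  then obtain g where "\<forall>y\<in>Y. g y \<in> Y \<and> u' (f y) z' < u' (f (g y)) z' \<and>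
      f ` ball2 Y u y (g y) \<subseteq> ball2 Y' u' (f y) z'"
    by metis
  then interpret attractor_descent Y u G infty Y' u' G' infty' f z' g
    using assms by unfold_locales auto
  show False using not_spherically_complete assms(8) by blast
qed

end
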